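(* Suppose a large scale group $G$ acts by uniform coarse equivalences on a large scale space $X$, and the action is proper and cobounded. Then for each $x_0\in X$ the map $G\to X$, $g\mapsto g\cdot x_0$, is a coarse equivalence.
   Context: A large scale space is a set $X$ with a family of covers (uniformly bounded covers) closed under stars $st(\mathcal U,\mathcal V)=\{st(A,\mathcal V):A\in\mathcal U\}$ (where $st(A,\mathcal V)$ is the union of elements of $\mathcal V$ meeting $A$) and under coarsenings-by-refinement (any cover refining a uniformly bounded cover is uniformly bounded); bounded sets are subsets of elements of uniformly bounded covers, and the union of two bounded sets is assumed bounded. A large scale group is a group $G$ with a bornology $\mathcal B$ (a cover closed under subsets and finite unions) closed under inverses and products; its uniformly bounded covers are those refining $\{gB\}_{g\in G}$ for some $B\in\mathcal B$. $G$ acts on $X$ by uniform coarse equivalences if for every uniformly bounded cover $\{U_s\}_{s\in S}$ of $X$ the cover $\{g\cdot U_s\}_{s\in S,g\in G}$ is uniformly bounded. The action is cobounded if $G\cdot B=X$ for some bounded $B\subseteq X$. The action is proper if for every bounded $B\subseteq X$ the set $\{g\in G:(g\cdot B)\cap B\neq\emptyset\}$ is bounded in $G$, and for every bounded $K\subseteq G$ and every $x\in X$ the set $K\cdot x$ is bounded in $X$. A map is a coarse equivalence if it is coarse (preimages of bounded sets bounded) and large scale continuous (images of uniformly bounded covers refine uniformly bounded covers) and has a coarse large scale continuous map in the other direction such that both compositions are close to the identities (maps $f,f'$ into $Y$ are close if $f(x)\in st(f'(x),\mathcal U)$ for all $x$ for some uniformly bounded cover $\mathcal U$ of $Y$). 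*)

theory Defs
  imports "HOL-Algebra.Group_Action"
begin

definition is_cover :: "'a set \<Rightarrow> 'a set set \<Rightarrow> bool" where
  "is_cover X U \<longleftrightarrow> U \<subseteq> Pow X \<and> \<Union>U = X"

definition st :: "'a set \<Rightarrow> 'a set set \<Rightarrow> 'a set" where
  "st A V = \<Union>{W \<in> V. W \<inter> A \<noteq> {}}"

definition st_cover :: "'a set set \<Rightarrow> 'a set set \<Rightarrow> 'a set set" where
  "st_cover U V = {st A V | A. A \<in> U}"

definition refines :: "'a set set \<Rightarrow> 'a set set \<Rightarrow> bool" where
  "refines U V \<longleftrightarrow> (\<forall>A\<in>U. \<exists>B\<in>V. A \<subseteq> B)"

definition ls_bounded :: "'a set set set \<Rightarrow> 'a set \<Rightarrow> bool" where
  "ls_bounded LS B \<longleftrightarrow> (\<exists>U\<in>LS. \<exists>A\<in>U. B \<subseteq> A)"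

text \<open>A large scale space: carrier X, family LS of uniformly bounded covers.\<close>
definition large_scale_space :: "'a set \<Rightarrow> 'a set set set \<Rightarrow> bool" where
  "large_scale_space X LS \<longleftrightarrow>
     (\<forall>U\<in>LS. is_cover X U) \<and>
     (\<forall>U\<in>LS. \<forall>V\<in>LS. st_cover U V \<in> LS) \<and>
     (\<forall>U V. V \<in> LS \<and> is_cover X U \<and> refines U V \<longrightarrow> U \<in> LS) \<and>
     (\<forall>A B. ls_bounded LS A \<and> ls_bounded LS B \<longrightarrow> ls_bounded LS (A \<union> B))"

definition large_scale_group :: "('g, 'm) monoid_scheme \<Rightarrow> 'g set set \<Rightarrow> bool" where
  "large_scale_group G \<B> \<longleftrightarrow> group G \<and>
     is_cover (carrier G) \<B> \<and>
     (\<forall>B\<in>\<B>. \<forall>C. C \<subseteq> B \<longrightarrow> C \<in> \<B>) \<and>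
     (\<forall>B\<in>\<B>. \<forall>C\<in>\<B>. B \<union> C \<in> \<B>) \<and>
     (\<forall>B\<in>\<B>. (\<lambda>g. inv\<^bsub>G\<^esub> g) ` B \<in> \<B>) \<and>
     (\<forall>B\<in>\<B>. \<forall>C\<in>\<B>. B <#>\<^bsub>G\<^esub> C \<in> \<B>)"

definition group_ls :: "('g, 'm) monoid_scheme \<Rightarrow> 'g set set \<Rightarrow> 'g set set set" where
  "group_ls G \<B> = {U. is_cover (carrier G) U \<and>
     (\<exists>B\<in>\<B>. refines U {g <#\<^bsub>G\<^esub> B | g. g \<in> carrier G})}"

definition acts_by_uniform_coarse_equivalences ::
  "('g, 'm) monoid_scheme \<Rightarrow> 'a set set set \<Rightarrow> ('g \<Rightarrow> 'a \<Rightarrow> 'a) \<Rightarrow> bool" where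
  "acts_by_uniform_coarse_equivalences G LS \<phi> \<longleftrightarrow>
     (\<forall>U\<in>LS. {\<phi> g ` A | g A. g \<in> carrier G \<and> A \<in> U} \<in> LS)"

definition cobounded_action ::
  "('g, 'm) monoid_scheme \<Rightarrow> 'a set \<Rightarrow> 'a set set set \<Rightarrow> ('g \<Rightarrow> 'a \<Rightarrow> 'a) \<Rightarrow> bool" where
  "cobounded_action G X LS \<phi> \<longleftrightarrow>
     (\<exists>B. ls_bounded LS B \<and> (\<Union>g\<in>carrier G. \<phi> g ` B) = X)"

definition proper_action ::
  "('g, 'm) monoid_scheme \<Rightarrow> 'g set set \<Rightarrow> 'a set \<Rightarrow> 'a set set set \<Rightarrow> ('g \<Rightarrow> 'a \<Rightarrow> 'a) \<Rightarrow> bool" where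
  "proper_action G \<B> X LS \<phi> \<longleftrightarrow>
     (\<forall>B. ls_bounded LS B \<longrightarrow>
        ls_bounded (group_ls G \<B>) {g \<in> carrier G. \<phi> g ` B \<inter> B \<noteq> {}}) \<and>
     (\<forall>K x. ls_bounded (group_ls G \<B>) K \<and> x \<in> X \<longrightarrow> ls_bounded LS ((\<lambda>g. \<phi> g x) ` K))"

definition coarse_map :: "'a set \<Rightarrow> 'a set set set \<Rightarrow> 'b set set set \<Rightarrow> ('a \<Rightarrow> 'b) \<Rightarrow> bool" where
  "coarse_map X LSX LSY f \<longleftrightarrow>
     (\<forall>B. ls_bounded LSY B \<longrightarrow> ls_bounded LSX (f -` B \<inter> X))"

definition ls_continuous :: "'a set set set \<Rightarrow> 'b set set set \<Rightarrow> ('a \<Rightarrow> 'b) \<Rightarrow> bool" where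
  "ls_continuous LSX LSY f \<longleftrightarrow>
     (\<forall>U\<in>LSX. \<exists>V\<in>LSY. refines ((\<lambda>A. f ` A) ` U) V)"

definition close_maps :: "'a set \<Rightarrow> 'b set set set \<Rightarrow> ('a \<Rightarrow> 'b) \<Rightarrow> ('a \<Rightarrow> 'b) \<Rightarrow> bool" where
  "close_maps X LSY f f' \<longleftrightarrow> (\<exists>U\<in>LSY. \<forall>x\<in>X. f x \<in> st {f' x} U)"

definition coarse_equivalence ::
  "'a set \<Rightarrow> 'a set set set \<Rightarrow> 'b set \<Rightarrow> 'b set set set \<Rightarrow> ('a \<Rightarrow> 'b) \<Rightarrow> bool" where
  "coarse_equivalence X LSX Y LSY f \<longleftrightarrow>
     f \<in> X \<rightarrow> Y \<and> coarse_map X LSX LSY f \<and> ls_continuous LSX LSY f \<and>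
     (\<exists>h. h \<in> Y \<rightarrow> X \<and> coarse_map Y LSY LSX h \<and> ls_continuous LSY LSX h \<and>
        close_maps X LSX (h \<circ> f) id \<and> close_maps Y LSY (f \<circ> h) id)"

end

theory Submission
  imports Defs
begin

text \<open>
  Choose a bounded set \<open>B\<close> containing \<open>x0\<close> whose translates cover \<open>X\<close>, and let
  \<open>h y\<close> be some \<open>g\<close> with \<open>y \<in> g \<cdot> B\<close>; this is a coarse inverse of the orbit map
  \<open>g \<mapsto> g \<cdot> x0\<close>. Every estimate comes from properness: if \<open>k \<cdot> S\<close> and \<open>k' \<cdot> S\<close> meet
  for a bounded set \<open>S\<close>, then \<open>k\<inverse> k'\<close> lies in the bounded set
  \<open>{g. g \<cdot> S \<inter> S \<noteq> {}}\<close>, so \<open>k\<close> and \<open>k'\<close> are close in \<open>G\<close>. Uniform coarse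
  equivalence of the action provides the uniformly bounded covers of \<open>X\<close> needed to
  compare points in one translate of a bounded set.
\<close>

lemma ls_bounded_subset: "ls_bounded LS B \<Longrightarrow> B' \<subseteq> B \<Longrightarrow> ls_bounded LS B'"
  unfolding ls_bounded_def by blast

lemma st_subset_st: "A \<subseteq> A' \<Longrightarrow> st A U \<subseteq> st A' U"
  unfolding st_def by blast

lemma mem_st_singleton: "W \<in> U \<Longrightarrow> y \<in> W \<Longrightarrow> z \<in> W \<Longrightarrow> z \<in> st {y} U"
  unfolding st_def by blast

context
  fixes X :: "'a set" and LS :: "'a set set set"
  assumes space: "large_scale_space X LS"
begin

lemma uniformly_bounded_cover: "U \<in> LS \<Longrightarrow> is_cover X U"
  and st_cover_uniformly_bounded: "U \<in> LS \<Longrightarrow> V \<in> LS \<Longrightarrow> st_cover U V \<in> LS"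
  and ls_bounded_Un: "ls_bounded LS A \<Longrightarrow> ls_bounded LS B \<Longrightarrow> ls_bounded LS (A \<union> B)"
  using space unfolding large_scale_space_def by blast+

lemma ls_bounded_subset_carrier: "ls_bounded LS B \<Longrightarrow> B \<subseteq> X"
  using uniformly_bounded_cover unfolding ls_bounded_def is_cover_def by blast

lemma ls_bounded_singleton:
  assumes "LS \<noteq> {}" and "y \<in> X"
  shows "ls_bounded LS {y}"
proof -
  obtain U where U: "U \<in> LS" using assms(1) by blast
  then obtain W where "W \<in> U" "y \<in> W"
    using uniformly_bounded_cover assms(2) unfolding is_cover_def by blast
  with U show ?thesis unfolding ls_bounded_def by blast
qed

lemma ls_bounded_st:
  assumes "ls_bounded LS E" and "U \<in> LS"
  shows "ls_bounded LS (st E U)"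
proof -
  obtain W D where W: "W \<in> LS" "D \<in> W" "E \<subseteq> D"
    using assms(1) unfolding ls_bounded_def by blast
  then have "st D U \<in> st_cover W U"
    unfolding st_cover_def by blast
  moreover have "st_cover W U \<in> LS"
    using st_cover_uniformly_bounded W(1) assms(2) .
  ultimately show ?thesis
    using st_subset_st[OF W(3)] unfolding ls_bounded_def by blast
qed

end

lemma (in group) mem_l_coset_of_inv_mult:
  assumes "k \<in> carrier G" "g \<in> carrier G" "inv k \<otimes> g \<in> C"
  shows "g \<in> k <# C"
proof -
  have "g = k \<otimes> (inv k \<otimes> g)"
    using assms(1,2) by (simp add: m_assoc[symmetric])
  with assms(3) show ?thesis unfolding l_coset_def by blast
qed

lemma (in monoid) mem_l_coset_self: "k \<in> carrier G \<Longrightarrow> \<one> \<in> C \<Longrightarrow> k \<in> k <# C"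
  unfolding l_coset_def using r_one by (metis UN_iff singletonI)

text \<open>Padding with \<open>\<one>\<close> makes the cosets cover the group even when \<open>C\<close> is empty.\<close>
definition coset_cover :: "('g, 'm) monoid_scheme \<Rightarrow> 'g set \<Rightarrow> 'g set set" where
  "coset_cover G C = {g <#\<^bsub>G\<^esub> (C \<union> {\<one>\<^bsub>G\<^esub>}) | g. g \<in> carrier G}"

context
  fixes G :: "('g, 'm) monoid_scheme" (structure) and \<B> :: "'g set set"
  assumes ls_group: "large_scale_group G \<B>"
begin

interpretation group G
  using ls_group unfolding large_scale_group_def by simp

lemma bornology_cover: "is_cover (carrier G) \<B>"
  and bornology_subset_closed: "B \<in> \<B> \<Longrightarrow> C \<subseteq> B \<Longrightarrow> C \<in> \<B>"
  and bornology_Un: "B \<in> \<B> \<Longrightarrow> C \<in> \<B> \<Longrightarrow> B \<union> C \<in> \<B>"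
  and bornology_set_mult: "B \<in> \<B> \<Longrightarrow> C \<in> \<B> \<Longrightarrow> B <#> C \<in> \<B>"
  using ls_group unfolding large_scale_group_def by blast+

lemma bornology_subset_carrier: "C \<in> \<B> \<Longrightarrow> C \<subseteq> carrier G"
  using bornology_cover unfolding is_cover_def by blast

lemma bornology_singleton:
  assumes "g \<in> carrier G"
  shows "{g} \<in> \<B>"
proof -
  obtain B where "B \<in> \<B>" "g \<in> B"
    using bornology_cover assms unfolding is_cover_def by blast
  then show ?thesis
    using bornology_subset_closed[of B "{g}"] by blast
qed

lemma bornology_l_coset: "g \<in> carrier G \<Longrightarrow> C \<in> \<B> \<Longrightarrow> g <# C \<in> \<B>"
  unfolding l_coset_eq_set_mult by (rule bornology_set_mult[OF bornology_singleton])

lemma bornology_insert_one: "C \<in> \<B> \<Longrightarrow> C \<union> {\<one>} \<in> \<B>"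
  using bornology_Un bornology_singleton[OF one_closed] by blast

lemma coset_cover_in_group_ls:
  assumes "C \<in> \<B>"
  shows "coset_cover G C \<in> group_ls G \<B>"
proof -
  have C1: "C \<union> {\<one>} \<in> \<B>"
    using bornology_insert_one[OF assms] .
  have "g <# (C \<union> {\<one>}) \<subseteq> carrier G" if "g \<in> carrier G" for g
    using l_coset_subset_G[OF bornology_subset_carrier[OF C1] that] .
  moreover have "g \<in> g <# (C \<union> {\<one>})" if "g \<in> carrier G" for g
    using mem_l_coset_self[OF that] by simp
  ultimately have "is_cover (carrier G) (coset_cover G C)"
    unfolding is_cover_def coset_cover_def by blast
  moreover have "refines (coset_cover G C) {g <# (C \<union> {\<one>}) | g. g \<in> carrier G}"
    unfolding refines_def coset_cover_def by blast
  ultimately show ?thesis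
    unfolding group_ls_def using C1 by blast
qed

lemma ls_bounded_group_ls_iff: "ls_bounded (group_ls G \<B>) K \<longleftrightarrow> (\<exists>C\<in>\<B>. K \<subseteq> C)"
proof
  assume "ls_bounded (group_ls G \<B>) K"
  then obtain U A where U: "U \<in> group_ls G \<B>" "A \<in> U" "K \<subseteq> A"
    unfolding ls_bounded_def by blast
  then obtain B where B: "B \<in> \<B>" "refines U {g <# B | g. g \<in> carrier G}"
    unfolding group_ls_def by blast
  then obtain g where "g \<in> carrier G" "A \<subseteq> g <# B"
    using U(2) unfolding refines_def by blast
  with B(1) U(3) show "\<exists>C\<in>\<B>. K \<subseteq> C"
    using bornology_l_coset by blast
next
  assume "\<exists>C\<in>\<B>. K \<subseteq> C"
  then obtain C where C: "C \<in> \<B>" "K \<subseteq> C" by blast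
  have "K \<subseteq> \<one> <# (C \<union> {\<one>})"
    using C(2) lcos_mult_one[OF bornology_subset_carrier[OF bornology_insert_one[OF C(1)]]] by blast
  moreover have "\<one> <# (C \<union> {\<one>}) \<in> coset_cover G C"
    unfolding coset_cover_def by blast
  ultimately show "ls_bounded (group_ls G \<B>) K"
    using coset_cover_in_group_ls[OF C(1)] unfolding ls_bounded_def by blast
qed

end

locale proper_cobounded_action = group_action G X \<phi>
  for G :: "('g, 'm) monoid_scheme" (structure) and X :: "'a set" and \<phi> +
  fixes \<B> :: "'g set set" and LS :: "'a set set set"
  assumes ls_group: "large_scale_group G \<B>"
    and ls_space: "large_scale_space X LS"
    and uniform: "acts_by_uniform_coarse_equivalences G LS \<phi>"
    and proper: "proper_action G \<B> X LS \<phi>"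
    and cobounded: "cobounded_action G X LS \<phi>"
begin

sublocale group G
  using ls_group unfolding large_scale_group_def by simp

definition translates :: "'a set set \<Rightarrow> 'a set set" where
  "translates U = {\<phi> g ` A | g A. g \<in> carrier G \<and> A \<in> U}"

definition return_set :: "'a set \<Rightarrow> 'g set" where
  "return_set S = {g \<in> carrier G. \<phi> g ` S \<inter> S \<noteq> {}}"

lemma translates_uniformly_bounded: "U \<in> LS \<Longrightarrow> translates U \<in> LS"
  using uniform unfolding acts_by_uniform_coarse_equivalences_def translates_def by blast

lemma translates_memI: "g \<in> carrier G \<Longrightarrow> A \<in> U \<Longrightarrow> \<phi> g ` A \<in> translates U"
  unfolding translates_def by blast

lemma action_inv_cancel: "g \<in> carrier G \<Longrightarrow> x \<in> X \<Longrightarrow> \<phi> g (\<phi> (inv g) x) = x"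
  using orbit_sym_aux[of "inv g" x] by simp

lemma ls_bounded_point: "x \<in> X \<Longrightarrow> ls_bounded LS {x}"
proof -
  assume "x \<in> X"
  moreover have "LS \<noteq> {}"
    using cobounded unfolding cobounded_action_def ls_bounded_def by blast
  ultimately show ?thesis
    using ls_bounded_singleton[OF ls_space] by blast
qed

lemma return_set_bounded:
  assumes "ls_bounded LS S"
  obtains C where "C \<in> \<B>" "return_set S \<subseteq> C"
  using proper assms ls_bounded_group_ls_iff[OF ls_group]
  unfolding proper_action_def return_set_def by blast

lemma ls_bounded_orbit_image: "C \<in> \<B> \<Longrightarrow> x \<in> X \<Longrightarrow> ls_bounded LS ((\<lambda>g. \<phi> g x) ` C)"
  using proper ls_bounded_group_ls_iff[OF ls_group]
  unfolding proper_action_def by blast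

lemma inv_mult_mem_return_set:
  assumes "k \<in> carrier G" "k' \<in> carrier G" "b \<in> S" "b' \<in> S" "S \<subseteq> X"
    and "\<phi> k b = \<phi> k' b'"
  shows "inv k \<otimes> k' \<in> return_set S"
proof -
  have "\<phi> (inv k \<otimes> k') b' = \<phi> (inv k) (\<phi> k b)"
    using composition_rule[of b' "inv k" k'] assms by auto
  also have "\<dots> = b"
    using orbit_sym_aux assms by blast
  finally show ?thesis
    unfolding return_set_def using assms by blast
qed

lemma coarse_orbit_map:
  assumes "x \<in> X"
  shows "coarse_map (carrier G) (group_ls G \<B>) LS (\<lambda>g. \<phi> g x)"
  unfolding coarse_map_def
proof (intro allI impI)
  fix K assume "ls_bounded LS K"
  then have "ls_bounded LS (K \<union> {x})"
    using ls_bounded_Un[OF ls_space] ls_bounded_point[OF assms] by blast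
  then obtain C where "C \<in> \<B>" "return_set (K \<union> {x}) \<subseteq> C"
    by (rule return_set_bounded)
  then show "ls_bounded (group_ls G \<B>) ((\<lambda>g. \<phi> g x) -` K \<inter> carrier G)"
    unfolding ls_bounded_group_ls_iff[OF ls_group] return_set_def by blast
qed

lemma ls_continuous_orbit_map:
  assumes "x \<in> X"
  shows "ls_continuous (group_ls G \<B>) LS (\<lambda>g. \<phi> g x)"
  unfolding ls_continuous_def
proof
  fix U assume "U \<in> group_ls G \<B>"
  then obtain B where B: "B \<in> \<B>" "refines U {g <# B | g. g \<in> carrier G}"
    unfolding group_ls_def by blast
  obtain W D where WD: "W \<in> LS" "D \<in> W" "(\<lambda>g. \<phi> g x) ` B \<subseteq> D"
    using ls_bounded_orbit_image[OF B(1) assms] unfolding ls_bounded_def by blast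
  have "\<exists>V\<in>translates W. (\<lambda>g. \<phi> g x) ` A \<subseteq> V" if "A \<in> U" for A
  proof -
    obtain g where g: "g \<in> carrier G" "A \<subseteq> g <# B"
      using B(2) \<open>A \<in> U\<close> unfolding refines_def by blast
    have "\<phi> (g \<otimes> b) x = \<phi> g (\<phi> b x)" if "b \<in> B" for b
      using composition_rule[OF assms g(1)] bornology_subset_carrier[OF ls_group B(1)] that
      by blast
    then have "(\<lambda>g. \<phi> g x) ` A \<subseteq> \<phi> g ` D"
      using g(2) WD(3) unfolding l_coset_def by fastforce
    moreover have "\<phi> g ` D \<in> translates W"
      using translates_memI[OF g(1) WD(2)] .
    ultimately show ?thesis by blast
  qed
  then show "\<exists>V\<in>LS. refines ((\<lambda>A. (\<lambda>g. \<phi> g x) ` A) ` U) V"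
    using translates_uniformly_bounded[OF WD(1)] unfolding refines_def by blast
qed

lemma cobounded_basepoint:
  assumes "x0 \<in> X"
  obtains B where "ls_bounded LS B" "X \<subseteq> (\<Union>g\<in>carrier G. \<phi> g ` B)" "x0 \<in> B"
proof -
  obtain B0 where B0: "ls_bounded LS B0" "(\<Union>g\<in>carrier G. \<phi> g ` B0) = X"
    using cobounded unfolding cobounded_action_def by blast
  show ?thesis
  proof (rule that)
    show "ls_bounded LS (B0 \<union> {x0})"
      using ls_bounded_Un[OF ls_space B0(1) ls_bounded_point[OF assms]] .
    show "X \<subseteq> (\<Union>g\<in>carrier G. \<phi> g ` (B0 \<union> {x0}))"
      using B0(2) by blast
    show "x0 \<in> B0 \<union> {x0}" by simp
  qed
qed

definition orbit_section :: "'a set \<Rightarrow> 'a \<Rightarrow> 'g" where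
  "orbit_section B y = (SOME g. g \<in> carrier G \<and> y \<in> \<phi> g ` B)"

context
  fixes B :: "'a set"
  assumes bounded: "ls_bounded LS B"
    and translates_cover: "X \<subseteq> (\<Union>g\<in>carrier G. \<phi> g ` B)"
begin

lemma orbit_section:
  assumes "y \<in> X"
  shows "orbit_section B y \<in> carrier G" and "y \<in> \<phi> (orbit_section B y) ` B"
proof -
  have "\<exists>g. g \<in> carrier G \<and> y \<in> \<phi> g ` B"
    using translates_cover assms by blast
  then have "orbit_section B y \<in> carrier G \<and> y \<in> \<phi> (orbit_section B y) ` B"
    unfolding orbit_section_def by (rule someI_ex)
  then show "orbit_section B y \<in> carrier G" and "y \<in> \<phi> (orbit_section B y) ` B"
    by blast+
qed

lemma orbit_section_obtain:
  assumes "y \<in> X"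
  obtains b where "b \<in> B" "\<phi> (orbit_section B y) b = y"
  using orbit_section(2)[OF assms] that by force

lemma inv_mult_orbit_section_mem_return_set:
  assumes U: "U \<in> LS" and A: "A \<in> U" "a \<in> A" "y \<in> A"
  defines "S \<equiv> B \<union> st B (translates U)"
  shows "inv (orbit_section B a) \<otimes> orbit_section B y \<in> return_set S"
proof -
  have "A \<subseteq> X"
    using uniformly_bounded_cover[OF ls_space U] A(1) unfolding is_cover_def by blast
  with A have X: "a \<in> X" "y \<in> X" by blast+
  have SX: "S \<subseteq> X"
    unfolding S_def using ls_bounded_subset_carrier[OF ls_space] bounded
      ls_bounded_st[OF ls_space bounded translates_uniformly_bounded[OF U]] by blast
  define k where "k = orbit_section B y"
  have k: "k \<in> carrier G"
    unfolding k_def using orbit_section(1)[OF X(2)] .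
  obtain b where b: "b \<in> B" "\<phi> k b = y"
    unfolding k_def using orbit_section_obtain[OF X(2)] .
  obtain b' where b': "b' \<in> B" "\<phi> (orbit_section B a) b' = a"
    using orbit_section_obtain[OF X(1)] .
  have "\<phi> (inv k) y = b"
    using orbit_sym_aux[OF k] b SX unfolding S_def by blast
  \<comment> \<open>\<open>k\<inverse>\<close> moves \<open>A\<close> onto a translate meeting \<open>B\<close>, so \<open>k\<inverse> a\<close> lies in \<open>S\<close>\<close>
  then have "\<phi> (inv k) ` A \<subseteq> st B (translates U)"
    using translates_memI[OF inv_closed[OF k] A(1)] A(3) b(1) unfolding st_def by blast
  then have "\<phi> (inv k) a \<in> S"
    unfolding S_def using A(2) by blast
  moreover have "\<phi> (orbit_section B a) b' = \<phi> k (\<phi> (inv k) a)"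
    using b'(2) action_inv_cancel[OF k X(1)] by simp
  moreover have "b' \<in> S"
    unfolding S_def using b'(1) by blast
  ultimately have "inv (orbit_section B a) \<otimes> k \<in> return_set S"
    using inv_mult_mem_return_set[OF orbit_section(1)[OF X(1)] k _ _ SX] by blast
  then show ?thesis
    unfolding k_def .
qed

lemma ls_continuous_orbit_section: "ls_continuous LS (group_ls G \<B>) (orbit_section B)"
  unfolding ls_continuous_def
proof
  fix U assume U: "U \<in> LS"
  define S where "S = B \<union> st B (translates U)"
  have "ls_bounded LS S"
    unfolding S_def
    using ls_bounded_Un[OF ls_space bounded
        ls_bounded_st[OF ls_space bounded translates_uniformly_bounded[OF U]]] .
  then obtain C where C: "C \<in> \<B>" "return_set S \<subseteq> C"
    by (rule return_set_bounded)
  have "\<exists>V\<in>coset_cover G C. orbit_section B ` A \<subseteq> V" if A: "A \<in> U" for A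
  proof (cases "A = {}")
    case True
    have "\<one> <# (C \<union> {\<one>}) \<in> coset_cover G C"
      unfolding coset_cover_def using one_closed by blast
    with True show ?thesis by blast
  next
    case False
    then obtain a where a: "a \<in> A" by blast
    have AX: "A \<subseteq> X"
      using uniformly_bounded_cover[OF ls_space U] A unfolding is_cover_def by blast
    have k: "orbit_section B a \<in> carrier G"
      using orbit_section(1) AX a by blast
    have "orbit_section B y \<in> orbit_section B a <# (C \<union> {\<one>})" if y: "y \<in> A" for y
    proof -
      have "inv (orbit_section B a) \<otimes> orbit_section B y \<in> C"
        using inv_mult_orbit_section_mem_return_set[OF U A a y] C(2) unfolding S_def ..
      moreover have "orbit_section B y \<in> carrier G"
        using orbit_section(1) AX y by blast
      ultimately show ?thesis
        using mem_l_coset_of_inv_mult[OF k, of "orbit_section B y" "C \<union> {\<one>}"] by blast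
    qed
    moreover have "orbit_section B a <# (C \<union> {\<one>}) \<in> coset_cover G C"
      unfolding coset_cover_def using k by blast
    ultimately show ?thesis by blast
  qed
  with coset_cover_in_group_ls[OF ls_group C(1)]
  show "\<exists>V\<in>group_ls G \<B>. refines ((\<lambda>A. orbit_section B ` A) ` U) V"
    unfolding refines_def by blast
qed

context
  fixes x0 :: 'a
  assumes basepoint: "x0 \<in> B"
begin

lemma orbit_section_near:
  obtains U where "U \<in> LS" "\<And>y. y \<in> X \<Longrightarrow> \<exists>W\<in>U. y \<in> W \<and> \<phi> (orbit_section B y) x0 \<in> W"
proof -
  obtain W D where WD: "W \<in> LS" "D \<in> W" "B \<subseteq> D"
    using bounded unfolding ls_bounded_def by blast
  show ?thesis
  proof (rule that)
    show "translates W \<in> LS"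
      using translates_uniformly_bounded[OF WD(1)] .
    show "\<exists>V\<in>translates W. y \<in> V \<and> \<phi> (orbit_section B y) x0 \<in> V" if "y \<in> X" for y
    proof -
      have "\<phi> (orbit_section B y) ` D \<in> translates W"
        using translates_memI[OF orbit_section(1)[OF that] WD(2)] .
      moreover have "y \<in> \<phi> (orbit_section B y) ` D"
        using subsetD[OF image_mono[OF WD(3)] orbit_section(2)[OF that]] .
      moreover have "\<phi> (orbit_section B y) x0 \<in> \<phi> (orbit_section B y) ` D"
        using imageI[OF subsetD[OF WD(3) basepoint]] .
      ultimately show ?thesis by blast
    qed
  qed
qed

lemma close_orbit_section: "close_maps X LS ((\<lambda>g. \<phi> g x0) \<circ> orbit_section B) id"
proof -
  obtain U where U: "U \<in> LS" "\<And>y. y \<in> X \<Longrightarrow> \<exists>W\<in>U. y \<in> W \<and> \<phi> (orbit_section B y) x0 \<in> W"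
    using orbit_section_near by blast
  have "\<phi> (orbit_section B y) x0 \<in> st {y} U" if y: "y \<in> X" for y
  proof -
    obtain W where "W \<in> U" "y \<in> W" "\<phi> (orbit_section B y) x0 \<in> W"
      using U(2)[OF y] by blast
    then show ?thesis
      by (rule mem_st_singleton)
  qed
  then have "\<forall>y\<in>X. ((\<lambda>g. \<phi> g x0) \<circ> orbit_section B) y \<in> st {id y} U"
    by simp
  with U(1) show ?thesis
    unfolding close_maps_def ..
qed

lemma coarse_orbit_section: "coarse_map X LS (group_ls G \<B>) (orbit_section B)"
  unfolding coarse_map_def
proof (intro allI impI)
  fix K assume "ls_bounded (group_ls G \<B>) K"
  then obtain C where C: "C \<in> \<B>" "K \<subseteq> C"
    unfolding ls_bounded_group_ls_iff[OF ls_group] by blast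
  obtain U where U: "U \<in> LS" "\<And>y. y \<in> X \<Longrightarrow> \<exists>W\<in>U. y \<in> W \<and> \<phi> (orbit_section B y) x0 \<in> W"
    using orbit_section_near by blast
  have "y \<in> st ((\<lambda>g. \<phi> g x0) ` C) U" if y: "y \<in> orbit_section B -` K \<inter> X" for y
  proof -
    obtain W where "W \<in> U" "y \<in> W" "\<phi> (orbit_section B y) x0 \<in> W"
      using U(2) y by blast
    moreover have "\<phi> (orbit_section B y) x0 \<in> (\<lambda>g. \<phi> g x0) ` C"
      using y C(2) by blast
    ultimately show ?thesis
      unfolding st_def by blast
  qed
  then have "orbit_section B -` K \<inter> X \<subseteq> st ((\<lambda>g. \<phi> g x0) ` C) U" ..
  moreover have "x0 \<in> X"
    using ls_bounded_subset_carrier[OF ls_space bounded] basepoint by blast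
  ultimately show "ls_bounded LS (orbit_section B -` K \<inter> X)"
    using ls_bounded_subset ls_bounded_st[OF ls_space ls_bounded_orbit_image[OF C(1)] U(1)]
    by metis
qed

lemma close_section_orbit:
  "close_maps (carrier G) (group_ls G \<B>) (orbit_section B \<circ> (\<lambda>g. \<phi> g x0)) id"
proof -
  have BX: "B \<subseteq> X"
    using ls_bounded_subset_carrier[OF ls_space bounded] .
  obtain C where C: "C \<in> \<B>" "return_set B \<subseteq> C"
    using return_set_bounded[OF bounded] by blast
  have "(orbit_section B \<circ> (\<lambda>g. \<phi> g x0)) g \<in> st {id g} (coset_cover G C)"
    if g: "g \<in> carrier G" for g
  proof -
    define k where "k = orbit_section B (\<phi> g x0)"
    have "\<phi> g x0 \<in> X"
      using element_image[OF g] basepoint BX by blast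
    then have k: "k \<in> carrier G" and "\<phi> g x0 \<in> \<phi> k ` B"
      unfolding k_def by (rule orbit_section)+
    then obtain b where b: "b \<in> B" "\<phi> k b = \<phi> g x0"
      by (metis imageE)
    have "inv k \<otimes> g \<in> C"
      using inv_mult_mem_return_set[OF k g b(1) basepoint BX b(2)] C(2) ..
    then have "g \<in> k <# (C \<union> {\<one>})" and "k \<in> k <# (C \<union> {\<one>})"
      using mem_l_coset_of_inv_mult[OF k g] mem_l_coset_self[OF k] by blast+
    moreover have "k <# (C \<union> {\<one>}) \<in> coset_cover G C"
      unfolding coset_cover_def using k by blast
    ultimately have "k \<in> st {g} (coset_cover G C)"
      by (intro mem_st_singleton)
    then show ?thesis
      unfolding k_def by simp
  qed
  then show ?thesis
    unfolding close_maps_def using coset_cover_in_group_ls[OF ls_group C(1)] by blast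
qed

end

end

end

theorem theorem6p4:
  fixes G :: "('g, 'm) monoid_scheme" and \<B> :: "'g set set"
    and X :: "'a set" and LS :: "'a set set set" and \<phi> :: "'g \<Rightarrow> 'a \<Rightarrow> 'a"
  assumes "large_scale_group G \<B>"
    and "large_scale_space X LS"
    and "group_action G X \<phi>"
    and "acts_by_uniform_coarse_equivalences G LS \<phi>"
    and "proper_action G \<B> X LS \<phi>"
    and "cobounded_action G X LS \<phi>"
    and "x0 \<in> X"
  shows "coarse_equivalence (carrier G) (group_ls G \<B>) X LS (\<lambda>g. \<phi> g x0)"
proof -
  interpret proper_cobounded_action G X \<phi> \<B> LS
    using assms(1-6) by (simp add: proper_cobounded_action_def proper_cobounded_action_axioms_def)
  obtain B where B: "ls_bounded LS B" "X \<subseteq> (\<Union>g\<in>carrier G. \<phi> g ` B)" "x0 \<in> B"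
    using cobounded_basepoint[OF assms(7)] by blast
  have "(\<lambda>g. \<phi> g x0) \<in> carrier G \<rightarrow> X"
    using element_image assms(7) by blast
  moreover have "orbit_section B \<in> X \<rightarrow> carrier G"
    using orbit_section(1)[OF B(1,2)] by blast
  ultimately show ?thesis
    unfolding coarse_equivalence_def
    using coarse_orbit_map[OF assms(7)] ls_continuous_orbit_map[OF assms(7)]
      coarse_orbit_section[OF B] ls_continuous_orbit_section[OF B(1,2)]
      close_section_orbit[OF B] close_orbit_section[OF B]
    by (intro conjI exI[of _ "orbit_section B"])
qed

end
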